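(* Let $A=(a_{ij})_{i,j\in I}$ be a generalized Cartan matrix with finite index set $I$, and let $U=(u_{ij})_{i,j\in I}$ be a complex matrix satisfying: (0) $u_{ij}=0$ if $i=j$ or $a_{ij}=0$; (1) $u_{ij}=-u_{ji}$ if $(a_{ij},a_{ji})=(-1,-1)$; (2) $u_{ij}\in\{-u_{ji},-2u_{ji}\}$ if $(a_{ij},a_{ji})=(-2,-1)$; (3) $u_{ij}\in\{-u_{ji},-\tfrac32u_{ji},-2u_{ji},-3u_{ji}\}$ if $(a_{ij},a_{ji})=(-3,-1)$. For each $i\in I$ let $s_i$ be the $\mathbb{C}$-automorphism of the field $\mathbb{C}(\alpha;f)$ determined by $$s_i(\alpha_j)=\alpha_j-a_{ij}\alpha_i,\qquad s_i(f_j)=f_j+\frac{\alpha_i}{f_i}\,u_{ij}\qquad(j\in I).$$ Then $s_i\mapsto s_i$ defines a representation of the Coxeter group $W(A)$ on $\mathbb{C}(\alpha;f)$ by field automorphisms; i.e. $s_i^2=\mathrm{id}$ for all $i$ and $(s_is_j)^{m_{ij}}=\mathrm{id}$ for all $i\neq j$ with $m_{ij}<\infty$.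
   Context: A generalized Cartan matrix $A=(a_{ij})_{i,j\in I}$ is an integer matrix with $a_{jj}=2$, $a_{ij}\le 0$ for $i\ne j$, and $a_{ij}=0\iff a_{ji}=0$. $\mathbb{C}(\alpha;f)$ denotes the field of rational functions over $\mathbb{C}$ in independent variables $\alpha_j,f_j$ ($j\in I$). The Coxeter group $W(A)$ is generated by $s_i$ ($i\in I$) with relations $s_i^2=1$ and $(s_is_j)^{m_{ij}}=1$ for $i\neq j$, where $m_{ij}=2,3,4,6,\infty$ according as $a_{ij}a_{ji}=0,1,2,3,\ge4$ (no relation when $m_{ij}=\infty$). *)

theory Defs
  imports "HOL-Library.Poly_Mapping" "HOL-Library.Product_Lexorder"
          "HOL-Computational_Algebra.Fraction_Field" Complex_Main
begin

definition gcm :: "('i \<Rightarrow> 'i \<Rightarrow> int) \<Rightarrow> bool" where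
  "gcm A \<longleftrightarrow> (\<forall>j. A j j = 2) \<and> (\<forall>i j. i \<noteq> j \<longrightarrow> A i j \<le> 0)
      \<and> (\<forall>i j. A i j = 0 \<longleftrightarrow> A j i = 0)"

text \<open>Coxeter exponents m_ij (None encodes infinity).\<close>
definition cox_m :: "('i \<Rightarrow> 'i \<Rightarrow> int) \<Rightarrow> 'i \<Rightarrow> 'i \<Rightarrow> nat option" where
  "cox_m A i j = (let p = A i j * A j i in
      if p = 0 then Some 2 else if p = 1 then Some 3 else if p = 2 then Some 4
      else if p = 3 then Some 6 else None)"

text \<open>Polynomial ring C[alpha_j, f_j] in the variables (False,j) = alpha_j, (True,j) = f_j,
  and its fraction field C(alpha;f).\<close>
type_synonym 'i cpoly = "((bool \<times> 'i) \<Rightarrow>\<^sub>0 nat) \<Rightarrow>\<^sub>0 complex"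
type_synonym 'i ratfun = "'i cpoly fract"

definition rconst :: "complex \<Rightarrow> ('i::linorder) ratfun" where
  "rconst c = Fraction_Field.Fract (Poly_Mapping.single 0 c) 1"

definition rvar :: "bool \<times> ('i::linorder) \<Rightarrow> 'i ratfun" where
  "rvar v = Fraction_Field.Fract (Poly_Mapping.single (Poly_Mapping.single v 1) 1) 1"

abbreviation ralpha :: "('i::linorder) \<Rightarrow> 'i ratfun" where
  "ralpha j \<equiv> rvar (False, j)"

abbreviation rf :: "('i::linorder) \<Rightarrow> 'i ratfun" where
  "rf j \<equiv> rvar (True, j)"

definition C_alg_hom :: "(('i::linorder) ratfun \<Rightarrow> 'i ratfun) \<Rightarrow> bool" where
  "C_alg_hom \<sigma> \<longleftrightarrow> (\<forall>x y. \<sigma> (x + y) = \<sigma> x + \<sigma> y) \<and> (\<forall>x y. \<sigma> (x * y) = \<sigma> x * \<sigma> y)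
      \<and> \<sigma> 1 = 1 \<and> (\<forall>c. \<sigma> (rconst c) = rconst c)"

definition is_s_family :: "('i \<Rightarrow> 'i \<Rightarrow> int) \<Rightarrow> ('i \<Rightarrow> 'i \<Rightarrow> complex)
    \<Rightarrow> (('i::linorder) \<Rightarrow> 'i ratfun \<Rightarrow> 'i ratfun) \<Rightarrow> bool" where
  "is_s_family A U s \<longleftrightarrow> (\<forall>i. C_alg_hom (s i) \<and> (\<forall>j.
      s i (ralpha j) = ralpha j - rconst (of_int (A i j)) * ralpha i \<and>
      s i (rf j) = rf j + (ralpha i / rf i) * rconst (U i j)))"

end

(*
  Each s_i is first defined on polynomials, by substituting for the variables. Applied twice,
  this substitution returns the polynomial times a power of f_i, so it is injective and extends
  to C(alpha;f); by construction its extension has the prescribed action on the generators.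

  An automorphism fixing all alpha_k and f_k is the identity, so the relations need only be
  checked on generators. For (s_i s_j)^m, the elements
  alpha_i, alpha_j and p = f_i f_j span a space on which s_i and s_j act linearly, as the
  reflections of a finite dihedral group, so (s_i s_j)^m fixes them. The generator f_i is fixed
  by s_i and multiplied by s_j(p)/p under s_j; hence (s_i s_j)^m multiplies it by the product
  of the sigma-orbit of sigma(p) divided by that of s_i(p), where sigma = s_i s_j, and
  conditions (1)-(3) on u_ij : u_ji are exactly what makes the two orbit products agree. Every
  other generator differs from an element fixed by both s_i and s_j by a combination of these,
  because the Cartan determinant 4 - a_ij a_ji is nonzero.
*)

theory Submission
  imports Defs
begin

section \<open>Ring homomorphisms\<close>

definition is_ring_hom :: "('a::ring_1 \<Rightarrow> 'b::ring_1) \<Rightarrow> bool" where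
  "is_ring_hom f \<longleftrightarrow> (\<forall>x y. f (x + y) = f x + f y) \<and> (\<forall>x y. f (x * y) = f x * f y) \<and> f 1 = 1"

lemma ring_hom_add: "is_ring_hom f \<Longrightarrow> f (x + y) = f x + f y"
  and ring_hom_mult: "is_ring_hom f \<Longrightarrow> f (x * y) = f x * f y"
  and ring_hom_1: "is_ring_hom f \<Longrightarrow> f 1 = 1"
  by (simp_all add: is_ring_hom_def)

lemma ring_hom_0: "is_ring_hom f \<Longrightarrow> f 0 = 0"
  using ring_hom_add[of f 0 0] by simp

lemma ring_hom_uminus: "is_ring_hom f \<Longrightarrow> f (- x) = - f x"
  using ring_hom_add[of f x "- x"] by (simp add: ring_hom_0 add_eq_0_iff)

lemma ring_hom_diff: "is_ring_hom f \<Longrightarrow> f (x - y) = f x - f y"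
  using ring_hom_add[of f x "- y"] by (simp add: ring_hom_uminus)

lemma ring_hom_of_nat: "is_ring_hom f \<Longrightarrow> f (of_nat n) = of_nat n"
  by (induct n) (simp_all add: ring_hom_0 ring_hom_1 ring_hom_add)

lemma ring_hom_numeral: "is_ring_hom f \<Longrightarrow> f (numeral n) = numeral n"
  using ring_hom_of_nat[of f "numeral n"] by simp

lemma ring_hom_of_int: "is_ring_hom f \<Longrightarrow> f (of_int k) = of_int k"
  by (cases k rule: int_cases)
    (simp_all add: ring_hom_uminus ring_hom_diff ring_hom_1 ring_hom_of_nat)

lemma ring_hom_power: "is_ring_hom f \<Longrightarrow> f (x ^ n) = f x ^ n"
  by (induct n) (simp_all add: ring_hom_1 ring_hom_mult)

lemma ring_hom_nonzero: "is_ring_hom (f :: 'a::division_ring \<Rightarrow> 'b::ring_1) \<Longrightarrow> x \<noteq> 0 \<Longrightarrow> f x \<noteq> 0"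
  using ring_hom_mult[of f x "inverse x"] by (auto simp: ring_hom_1)

lemma ring_hom_inverse: "is_ring_hom (f :: 'a::field \<Rightarrow> 'b::field) \<Longrightarrow> f (inverse x) = inverse (f x)"
  using ring_hom_mult[of f x "inverse x"]
  by (cases "x = 0") (auto simp: ring_hom_0 ring_hom_1 inverse_unique)

lemma ring_hom_divide: "is_ring_hom (f :: 'a::field \<Rightarrow> 'b::field) \<Longrightarrow> f (x / y) = f x / f y"
  by (simp add: divide_inverse ring_hom_mult ring_hom_inverse)

lemmas ring_hom_field_simps = ring_hom_add ring_hom_mult ring_hom_1 ring_hom_0 ring_hom_uminus
  ring_hom_diff ring_hom_numeral ring_hom_of_int ring_hom_power ring_hom_divide

lemma ring_hom_id: "is_ring_hom id"
  by (simp add: is_ring_hom_def)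

lemma ring_hom_comp: "is_ring_hom f \<Longrightarrow> is_ring_hom g \<Longrightarrow> is_ring_hom (f \<circ> g)"
  by (simp add: is_ring_hom_def)

lemma ring_hom_funpow: "is_ring_hom (f :: 'a::ring_1 \<Rightarrow> 'a) \<Longrightarrow> is_ring_hom (f ^^ n)"
  by (induct n) (simp_all add: ring_hom_id ring_hom_comp)

text \<open>If an endomorphism \<open>\<sigma>\<close> multiplies \<open>x\<close> by \<open>q'/q\<close>, then \<open>\<sigma>\<^sup>m\<close> multiplies it by the
  product of the \<open>\<sigma>\<^sup>k(q'/q)\<close>, \<open>k < m\<close>; the statement is kept free of division.\<close>
lemma ring_hom_funpow_cocycle:
  fixes \<sigma> :: "'a::comm_ring_1 \<Rightarrow> 'a"
  assumes \<sigma>: "is_ring_hom \<sigma>" and x: "\<sigma> x * q = x * q'"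
  shows "(\<sigma> ^^ m) x * (\<Prod>k<m. (\<sigma> ^^ k) q) = x * (\<Prod>k<m. (\<sigma> ^^ k) q')"
proof (induct m)
  case 0
  show ?case by simp
next
  case (Suc m)
  have step: "(\<sigma> ^^ m) (\<sigma> x) * (\<sigma> ^^ m) q = (\<sigma> ^^ m) x * (\<sigma> ^^ m) q'"
    using x ring_hom_mult[OF ring_hom_funpow[OF \<sigma>]] by metis
  have "(\<sigma> ^^ Suc m) x * (\<Prod>k<Suc m. (\<sigma> ^^ k) q)
      = ((\<sigma> ^^ m) (\<sigma> x) * (\<sigma> ^^ m) q) * (\<Prod>k<m. (\<sigma> ^^ k) q)"
    by (simp add: funpow_swap1 ac_simps)
  also have "\<dots> = ((\<sigma> ^^ m) x * (\<Prod>k<m. (\<sigma> ^^ k) q)) * (\<sigma> ^^ m) q'"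
    by (simp only: step) (simp add: ac_simps)
  also have "\<dots> = x * (\<Prod>k<Suc m. (\<sigma> ^^ k) q')"
    by (simp add: Suc ac_simps)
  finally show ?case .
qed

section \<open>Polynomials as finitely supported maps\<close>

definition pvar :: "'v \<Rightarrow> ('v \<Rightarrow>\<^sub>0 nat) \<Rightarrow>\<^sub>0 'c::zero_neq_one" where
  "pvar v = Poly_Mapping.single (Poly_Mapping.single v 1) 1"

lemma update_eq_single_add:
  "a \<notin> Poly_Mapping.keys f \<Longrightarrow> Poly_Mapping.update a b f = Poly_Mapping.single a b + f"
  by (rule poly_mapping_eqI) (auto simp: lookup_update lookup_add lookup_single in_keys_iff)

lemma single_monomial_eq_pvar_power:
  "Poly_Mapping.single (Poly_Mapping.single v k) (1::'c::comm_semiring_1) = pvar v ^ k"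
proof (induct k)
  case (Suc k)
  have "Poly_Mapping.single (Poly_Mapping.single v (Suc k)) (1::'c)
      = Poly_Mapping.single (Poly_Mapping.single v 1) 1
        * Poly_Mapping.single (Poly_Mapping.single v k) 1"
    by (simp add: mult_single flip: single_add)
  then show ?case
    using Suc by (simp add: pvar_def)
qed simp

lemma mpoly_induct [case_names const var add mult]:
  fixes Q :: "(('v \<Rightarrow>\<^sub>0 nat) \<Rightarrow>\<^sub>0 'c::comm_semiring_1) \<Rightarrow> bool"
  assumes Q_const: "\<And>c. Q (Poly_Mapping.single 0 c)"
    and Q_var: "\<And>v. Q (pvar v)"
    and Q_add: "\<And>p q. Q p \<Longrightarrow> Q q \<Longrightarrow> Q (p + q)"
    and Q_mult: "\<And>p q. Q p \<Longrightarrow> Q q \<Longrightarrow> Q (p * q)"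
  shows "Q P"
proof -
  have power: "Q (p ^ k)" if "Q p" for p k
    using Q_const[of 1] Q_mult that by (induct k) simp_all
  have monomial: "Q (Poly_Mapping.single m 1)" for m
  proof (induct m rule: update_induct)
    case const
    show ?case using Q_const[of 1] by simp
  next
    case (update f a b)
    then have "Poly_Mapping.single (Poly_Mapping.update a b f) (1::'c)
        = pvar a ^ b * Poly_Mapping.single f 1"
      by (simp add: update_eq_single_add mult_single single_monomial_eq_pvar_power[symmetric])
    then show ?case
      using update power[OF Q_var] Q_mult by metis
  qed
  show ?thesis
  proof (induct P rule: update_induct)
    case const
    show ?case using Q_const[of 0] by simp
  next
    case (update f a b)
    have "Poly_Mapping.single a b = Poly_Mapping.single 0 b * Poly_Mapping.single a (1::'c)"
      by (simp add: mult_single)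
    then show ?case
      using update by (simp add: update_eq_single_add Q_add Q_mult monomial Q_const)
  qed
qed

definition monomial_value :: "('v \<Rightarrow> 'b::comm_monoid_mult) \<Rightarrow> ('v \<Rightarrow>\<^sub>0 nat) \<Rightarrow> 'b" where
  "monomial_value g m = (\<Prod>v\<in>Poly_Mapping.keys m. g v ^ Poly_Mapping.lookup m v)"

definition insertion ::
    "('c::comm_ring_1 \<Rightarrow> 'b::comm_ring_1) \<Rightarrow> ('v \<Rightarrow> 'b) \<Rightarrow> (('v \<Rightarrow>\<^sub>0 nat) \<Rightarrow>\<^sub>0 'c) \<Rightarrow> 'b" where
  "insertion \<kappa> g P = (\<Sum>m\<in>Poly_Mapping.keys P. \<kappa> (Poly_Mapping.lookup P m) * monomial_value g m)"

lemma monomial_value_superset: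
  "finite S \<Longrightarrow> Poly_Mapping.keys m \<subseteq> S \<Longrightarrow>
    monomial_value g m = (\<Prod>v\<in>S. g v ^ Poly_Mapping.lookup m v)"
  unfolding monomial_value_def by (rule prod.mono_neutral_left) (auto simp: in_keys_iff)

lemma monomial_value_add: "monomial_value g (a + b) = monomial_value g a * monomial_value g b"
proof -
  let ?S = "Poly_Mapping.keys a \<union> Poly_Mapping.keys b"
  have "monomial_value g (a + b) = (\<Prod>v\<in>?S. g v ^ Poly_Mapping.lookup (a + b) v)"
    using keys_add[of a b] by (intro monomial_value_superset) auto
  also have "\<dots> = (\<Prod>v\<in>?S. g v ^ Poly_Mapping.lookup a v) * (\<Prod>v\<in>?S. g v ^ Poly_Mapping.lookup b v)"
    by (simp add: lookup_add power_add prod.distrib)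
  also have "\<dots> = monomial_value g a * monomial_value g b"
    using monomial_value_superset[of ?S a g] monomial_value_superset[of ?S b g] by simp
  finally show ?thesis .
qed

context
  fixes \<kappa> :: "'c::comm_ring_1 \<Rightarrow> 'b::comm_ring_1"
  assumes \<kappa>: "is_ring_hom \<kappa>"
begin

lemma insertion_superset:
  "finite S \<Longrightarrow> Poly_Mapping.keys P \<subseteq> S \<Longrightarrow>
    insertion \<kappa> g P = (\<Sum>m\<in>S. \<kappa> (Poly_Mapping.lookup P m) * monomial_value g m)"
  unfolding insertion_def
  by (rule sum.mono_neutral_left) (auto simp: in_keys_iff ring_hom_0[OF \<kappa>])

lemma insertion_add: "insertion \<kappa> g (p + q) = insertion \<kappa> g p + insertion \<kappa> g q"
proof -
  let ?S = "Poly_Mapping.keys p \<union> Poly_Mapping.keys q"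
  have "insertion \<kappa> g (p + q) = (\<Sum>m\<in>?S. \<kappa> (Poly_Mapping.lookup (p + q) m) * monomial_value g m)"
    using keys_add[of p q] by (intro insertion_superset) auto
  also have "\<dots> = (\<Sum>m\<in>?S. \<kappa> (Poly_Mapping.lookup p m) * monomial_value g m)
      + (\<Sum>m\<in>?S. \<kappa> (Poly_Mapping.lookup q m) * monomial_value g m)"
    by (simp add: lookup_add ring_hom_add[OF \<kappa>] distrib_right sum.distrib)
  also have "\<dots> = insertion \<kappa> g p + insertion \<kappa> g q"
    using insertion_superset[of ?S p g] insertion_superset[of ?S q g] by simp
  finally show ?thesis .
qed

lemma insertion_single: "insertion \<kappa> g (Poly_Mapping.single m c) = \<kappa> c * monomial_value g m"
  by (subst insertion_superset[of "{m}"]) auto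

lemma insertion_single_mult:
  "insertion \<kappa> g (Poly_Mapping.single m c * p) = \<kappa> c * monomial_value g m * insertion \<kappa> g p"
proof (induct p rule: update_induct)
  case const
  show ?case by (simp add: insertion_def)
next
  case (update f a b)
  then show ?case
    by (simp add: update_eq_single_add distrib_left insertion_add mult_single insertion_single
        monomial_value_add ring_hom_mult[OF \<kappa>] algebra_simps)
qed

lemma insertion_mult: "insertion \<kappa> g (p * q) = insertion \<kappa> g p * insertion \<kappa> g q"
proof (induct p rule: update_induct)
  case const
  show ?case by (simp add: insertion_def)
next
  case (update f a b)
  then show ?case
    by (simp add: update_eq_single_add distrib_right insertion_add insertion_single_mult
        insertion_single)
qed

lemma insertion_const: "insertion \<kappa> g (Poly_Mapping.single 0 c) = \<kappa> c"
  by (simp add: insertion_single monomial_value_def)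

lemma ring_hom_insertion: "is_ring_hom (insertion \<kappa> g)"
  unfolding is_ring_hom_def
  using insertion_const[of g 1] by (simp add: insertion_add insertion_mult ring_hom_1[OF \<kappa>])

lemma insertion_pvar: "insertion \<kappa> g (pvar v) = g v"
  by (simp add: pvar_def insertion_single monomial_value_def ring_hom_1[OF \<kappa>])

end

section \<open>Extending ring homomorphisms to fraction fields\<close>

definition to_fract :: "'a::idom \<Rightarrow> 'a fract" where
  "to_fract a = Fraction_Field.Fract a 1"

lemma ring_hom_to_fract: "is_ring_hom to_fract"
  by (simp add: is_ring_hom_def to_fract_def fract_collapse)

lemma to_fract_eq_iff: "to_fract a = to_fract b \<longleftrightarrow> a = b"
  by (simp add: to_fract_def eq_fract)

lemma Fract_eq_to_fract_divide: "b \<noteq> 0 \<Longrightarrow> Fraction_Field.Fract a b = to_fract a / to_fract b"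
  by (simp add: to_fract_def)

definition fract_map :: "('a::idom \<Rightarrow> 'b::field) \<Rightarrow> 'a fract \<Rightarrow> 'b" where
  "fract_map \<phi> x = (case SOME (a, b). b \<noteq> 0 \<and> x = Fraction_Field.Fract a b of (a, b) \<Rightarrow> \<phi> a / \<phi> b)"

context
  fixes \<phi> :: "'a::idom \<Rightarrow> 'b::field"
  assumes \<phi>: "is_ring_hom \<phi>" and \<phi>_nonzero: "\<And>b. b \<noteq> 0 \<Longrightarrow> \<phi> b \<noteq> 0"
begin

lemma fract_map_Fract: "b \<noteq> 0 \<Longrightarrow> fract_map \<phi> (Fraction_Field.Fract a b) = \<phi> a / \<phi> b"
proof -
  assume b: "b \<noteq> 0"
  define ab where
    "ab = (SOME (a', b'). b' \<noteq> 0 \<and> Fraction_Field.Fract a b = Fraction_Field.Fract a' b')"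
  have "case ab of (a', b') \<Rightarrow> b' \<noteq> 0 \<and> Fraction_Field.Fract a b = Fraction_Field.Fract a' b'"
    unfolding ab_def by (rule someI[of _ "(a, b)"]) (simp add: b)
  then obtain a' b'
    where ab: "ab = (a', b')" "b' \<noteq> 0" "Fraction_Field.Fract a b = Fraction_Field.Fract a' b'"
    by (cases ab) auto
  then have "\<phi> a * \<phi> b' = \<phi> a' * \<phi> b"
    using b eq_fract(1) ring_hom_mult[OF \<phi>] by metis
  then show ?thesis
    using ab b \<phi>_nonzero unfolding fract_map_def ab_def[symmetric]
    by (simp add: field_simps)
qed

lemma ring_hom_fract_map: "is_ring_hom (fract_map \<phi>)"
  unfolding is_ring_hom_def
proof (intro conjI allI)
  fix x y :: "'a fract"
  obtain a b where x: "x = Fraction_Field.Fract a b" "b \<noteq> 0" by (cases x)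
  obtain c d where y: "y = Fraction_Field.Fract c d" "d \<noteq> 0" by (cases y)
  show "fract_map \<phi> (x + y) = fract_map \<phi> x + fract_map \<phi> y"
    using x y \<phi>_nonzero[of b] \<phi>_nonzero[of d]
    by (simp add: fract_map_Fract ring_hom_add[OF \<phi>] ring_hom_mult[OF \<phi>] field_simps)
  show "fract_map \<phi> (x * y) = fract_map \<phi> x * fract_map \<phi> y"
    using x y by (simp add: fract_map_Fract ring_hom_mult[OF \<phi>])
next
  show "fract_map \<phi> 1 = 1"
    using fract_map_Fract[of 1 1] by (simp add: fract_collapse ring_hom_1[OF \<phi>])
qed

end

section \<open>The field \<open>\<complex>(\<alpha>;f)\<close> and the automorphisms \<open>s\<^sub>i\<close>\<close>

lemma rconst_eq_to_fract: "rconst c = to_fract (Poly_Mapping.single 0 c)"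
  by (simp add: rconst_def to_fract_def)

lemma rvar_eq_to_fract: "rvar v = to_fract (pvar v)"
  by (simp add: rvar_def to_fract_def pvar_def)

lemma ring_hom_rconst: "is_ring_hom (rconst :: complex \<Rightarrow> ('i::linorder) ratfun)"
  by (simp add: is_ring_hom_def rconst_def single_add mult_single fract_collapse)

lemma rvar_nonzero: "rvar v \<noteq> 0"
  by (simp add: rvar_def eq_fract Zero_fract_def) (metis lookup_single_eq lookup_zero one_neq_zero)

lemma C_alg_hom_ring_hom: "C_alg_hom f \<Longrightarrow> is_ring_hom f"
  by (simp add: C_alg_hom_def is_ring_hom_def)

lemma C_alg_hom_rconst: "C_alg_hom f \<Longrightarrow> f (rconst c) = rconst c"
  by (simp add: C_alg_hom_def)

lemma C_alg_hom_comp: "C_alg_hom f \<Longrightarrow> C_alg_hom g \<Longrightarrow> C_alg_hom (f \<circ> g)"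
  by (simp add: C_alg_hom_def)

lemma C_alg_hom_funpow: "C_alg_hom f \<Longrightarrow> C_alg_hom (f ^^ n)"
  by (induct n) (simp_all add: C_alg_hom_comp, simp add: C_alg_hom_def)

lemma C_alg_hom_eq_id:
  fixes f :: "('i::linorder) ratfun \<Rightarrow> 'i ratfun"
  assumes f: "C_alg_hom f" and fixes_vars: "\<And>v. f (rvar v) = rvar v"
  shows "f = id"
proof
  have polys: "f (to_fract P) = to_fract P" for P
  proof (induct P rule: mpoly_induct)
    case (const c)
    show ?case using C_alg_hom_rconst[OF f] by (simp flip: rconst_eq_to_fract)
  next
    case (var v)
    show ?case using fixes_vars by (simp flip: rvar_eq_to_fract)
  next
    case (add p q)
    then show ?case
      using C_alg_hom_ring_hom[OF f] by (simp add: ring_hom_add ring_hom_to_fract)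
  next
    case (mult p q)
    then show ?case
      using C_alg_hom_ring_hom[OF f] by (simp add: ring_hom_mult ring_hom_to_fract)
  qed
  fix x :: "'i ratfun"
  obtain a b where "x = Fraction_Field.Fract a b" "b \<noteq> 0" by (cases x)
  then show "f x = id x"
    using polys ring_hom_divide[OF C_alg_hom_ring_hom[OF f]] by (simp add: Fract_eq_to_fract_divide)
qed

definition s_image ::
    "('i \<Rightarrow> 'i \<Rightarrow> int) \<Rightarrow> ('i \<Rightarrow> 'i \<Rightarrow> complex) \<Rightarrow> 'i \<Rightarrow> bool \<times> 'i \<Rightarrow> ('i::linorder) ratfun"
  where "s_image A U i = (\<lambda>(is_f, j). if is_f then rf j + ralpha i / rf i * rconst (U i j)
                                      else ralpha j - of_int (A i j) * ralpha i)"

definition s_poly ::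
    "('i \<Rightarrow> 'i \<Rightarrow> int) \<Rightarrow> ('i \<Rightarrow> 'i \<Rightarrow> complex) \<Rightarrow> 'i \<Rightarrow> 'i cpoly \<Rightarrow> ('i::linorder) ratfun"
  where "s_poly A U i = insertion rconst (s_image A U i)"

definition s_field ::
    "('i \<Rightarrow> 'i \<Rightarrow> int) \<Rightarrow> ('i \<Rightarrow> 'i \<Rightarrow> complex) \<Rightarrow> 'i \<Rightarrow> 'i ratfun \<Rightarrow> ('i::linorder) ratfun"
  where "s_field A U i = fract_map (s_poly A U i)"

lemma ring_hom_s_poly: "is_ring_hom (s_poly A U i)"
  by (simp add: s_poly_def ring_hom_insertion ring_hom_rconst)

lemma s_poly_const: "s_poly A U i (Poly_Mapping.single 0 c) = rconst c"
  by (simp add: s_poly_def insertion_const ring_hom_rconst)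

lemma s_poly_pvar: "s_poly A U i (pvar v) = s_image A U i v"
  by (simp add: s_poly_def insertion_pvar ring_hom_rconst)

lemmas s_poly_simps = ring_hom_add[OF ring_hom_s_poly] ring_hom_mult[OF ring_hom_s_poly]
  ring_hom_diff[OF ring_hom_s_poly] ring_hom_power[OF ring_hom_s_poly] s_poly_const s_poly_pvar

text \<open>Up to powers of \<open>f\<^sub>i\<close>, which it fixes, the substitution is an involution; hence it is
  injective and extends to the fraction field.\<close>
lemma s_poly_involutive:
  assumes Aii: "A i i = 2" and Uii: "U i i = 0"
  shows "\<exists>Q N. s_poly A U i P * rf i ^ N = to_fract Q \<and> s_poly A U i Q = to_fract P * rf i ^ N"
proof -
  note to_fract_simps = ring_hom_add[OF ring_hom_to_fract] ring_hom_mult[OF ring_hom_to_fract]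
    ring_hom_diff[OF ring_hom_to_fract] ring_hom_power[OF ring_hom_to_fract]
    ring_hom_of_int[OF ring_hom_to_fract] rconst_eq_to_fract[symmetric] rvar_eq_to_fract[symmetric]
  have nz: "rf i \<noteq> 0" by (rule rvar_nonzero)
  have fi: "s_poly A U i (pvar (True, i)) = rf i"
    using Uii by (simp add: s_poly_pvar s_image_def ring_hom_0[OF ring_hom_rconst])
  show ?thesis
  proof (induct P rule: mpoly_induct)
    case (const c)
    show ?case
      by (rule exI[of _ "Poly_Mapping.single 0 c"], rule exI[of _ 0])
        (simp add: s_poly_const rconst_eq_to_fract)
  next
    case (var v)
    obtain is_f j where v: "v = (is_f, j)" by (cases v)
    show ?case
    proof (cases is_f)
      case True
      let ?Q = "pvar (True, j) * pvar (True, i) + Poly_Mapping.single 0 (U i j) * pvar (False, i)"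
      have "s_poly A U i (pvar v) * rf i ^ 1 = to_fract ?Q
          \<and> s_poly A U i ?Q = to_fract (pvar v) * rf i ^ 1"
        using v True nz Aii Uii
        by (simp add: s_poly_simps s_image_def to_fract_simps ring_hom_0[OF ring_hom_rconst]
            field_simps)
      then show ?thesis by blast
    next
      case False
      let ?Q = "pvar (False, j) - of_int (A i j) * pvar (False, i)"
      have "s_poly A U i (pvar v) * rf i ^ 0 = to_fract ?Q
          \<and> s_poly A U i ?Q = to_fract (pvar v) * rf i ^ 0"
        using v False Aii
        by (simp add: s_poly_simps ring_hom_of_int[OF ring_hom_s_poly] s_image_def to_fract_simps
            algebra_simps)
      then show ?thesis by blast
    qed
  next
    case (add p q)
    then obtain Q N Q' N' where rep:
      "s_poly A U i p * rf i ^ N = to_fract Q" "s_poly A U i Q = to_fract p * rf i ^ N"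
      "s_poly A U i q * rf i ^ N' = to_fract Q'" "s_poly A U i Q' = to_fract q * rf i ^ N'"
      by blast
    let ?Q = "Q * pvar (True, i) ^ N' + Q' * pvar (True, i) ^ N"
    from rep have "s_poly A U i (p + q) * rf i ^ (N + N') = to_fract ?Q
        \<and> s_poly A U i ?Q = to_fract (p + q) * rf i ^ (N + N')"
      using fi by (simp add: s_poly_simps to_fract_simps power_add algebra_simps)
    then show ?case by blast
  next
    case (mult p q)
    then obtain Q N Q' N' where
      "s_poly A U i p * rf i ^ N = to_fract Q" "s_poly A U i Q = to_fract p * rf i ^ N"
      "s_poly A U i q * rf i ^ N' = to_fract Q'" "s_poly A U i Q' = to_fract q * rf i ^ N'"
      by blast
    moreover have "s_poly A U i (p * q) * rf i ^ (N + N')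
        = (s_poly A U i p * rf i ^ N) * (s_poly A U i q * rf i ^ N')"
      by (simp add: s_poly_simps power_add ac_simps)
    ultimately have "s_poly A U i (p * q) * rf i ^ (N + N') = to_fract (Q * Q')
        \<and> s_poly A U i (Q * Q') = to_fract (p * q) * rf i ^ (N + N')"
      by (simp add: s_poly_simps to_fract_simps power_add ac_simps)
    then show ?case by blast
  qed
qed

lemma s_poly_nonzero:
  assumes "A i i = 2" and "U i i = 0" and "P \<noteq> 0"
  shows "s_poly A U i P \<noteq> 0"
proof
  assume "s_poly A U i P = 0"
  moreover obtain Q N
    where "s_poly A U i P * rf i ^ N = to_fract Q" "s_poly A U i Q = to_fract P * rf i ^ N"
    using s_poly_involutive[where A = A and U = U and i = i, OF assms(1,2)] by blast
  ultimately have "to_fract P = to_fract 0"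
    using rvar_nonzero ring_hom_0[OF ring_hom_to_fract] ring_hom_0[OF ring_hom_s_poly]
      to_fract_eq_iff
    by (metis mult_eq_0_iff mult_zero_left power_eq_0_iff)
  with \<open>P \<noteq> 0\<close> show False
    by (simp add: to_fract_eq_iff)
qed

lemma s_field_Fract:
  assumes "A i i = 2" and "U i i = 0" and "b \<noteq> 0"
  shows "s_field A U i (Fraction_Field.Fract a b) = s_poly A U i a / s_poly A U i b"
  unfolding s_field_def by (intro fract_map_Fract ring_hom_s_poly s_poly_nonzero assms)

lemma is_s_family_s_field:
  assumes Aii: "\<And>i. A i i = 2" and Uii: "\<And>i. U i i = 0"
  shows "is_s_family A U (s_field A U)"
  unfolding is_s_family_def
proof (intro allI conjI)
  fix i j
  have hom: "is_ring_hom (s_field A U i)"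
    unfolding s_field_def by (intro ring_hom_fract_map ring_hom_s_poly s_poly_nonzero Aii Uii)
  have var: "s_field A U i (rvar v) = s_image A U i v" for v
    using s_field_Fract[where A = A and U = U and i = i and a = "pvar v" and b = 1, OF Aii Uii]
    by (simp add: rvar_def pvar_def ring_hom_1[OF ring_hom_s_poly] flip: s_poly_pvar)
  have "s_field A U i (rconst c) = rconst c" for c
    using s_field_Fract[where A = A and U = U and i = i and a = "Poly_Mapping.single 0 c" and b = 1,
        OF Aii Uii]
    by (simp add: rconst_def ring_hom_1[OF ring_hom_s_poly] s_poly_const)
  with hom show "C_alg_hom (s_field A U i)"
    by (simp add: C_alg_hom_def is_ring_hom_def)
  show "s_field A U i (ralpha j) = ralpha j - rconst (of_int (A i j)) * ralpha i"
    by (simp add: var s_image_def ring_hom_of_int[OF ring_hom_rconst])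
  show "s_field A U i (rf j) = rf j + ralpha i / rf i * rconst (U i j)"
    by (simp add: var s_image_def)
qed

section \<open>The dihedral computation\<close>

lemma funpow_comp_fixed: "s x = x \<Longrightarrow> t x = x \<Longrightarrow> ((s \<circ> t) ^^ m) x = x"
  by (induct m) simp_all

lemma comp_funpow_comp_shift: "a \<circ> (b \<circ> a) ^^ m = (a \<circ> b) ^^ m \<circ> a"
proof (induct m)
  case (Suc m)
  have "a \<circ> (b \<circ> a) ^^ Suc m = (a \<circ> b) \<circ> (a \<circ> (b \<circ> a) ^^ m)"
    by (simp add: comp_assoc)
  also have "\<dots> = (a \<circ> b) ^^ Suc m \<circ> a"
    by (simp only: Suc funpow.simps(2) comp_assoc)
  finally show ?case .
qed simp

lemma involutions_funpow_comp_swap: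
  assumes a: "a \<circ> a = id" and b: "b \<circ> b = id" and ba: "(b \<circ> a) ^^ m = id"
  shows "(a \<circ> b) ^^ m = id"
proof -
  have "(a \<circ> b) ^^ m = (a \<circ> b) ^^ m \<circ> (a \<circ> a)"
    using a by simp
  also have "\<dots> = a \<circ> (b \<circ> a) ^^ m \<circ> a"
    by (simp add: comp_funpow_comp_shift comp_assoc)
  finally show ?thesis
    using ba a by simp
qed

text \<open>An entry \<open>(n, k, e, d, m)\<close> stands for \<open>a\<^sub>i\<^sub>j = -n\<close>, \<open>a\<^sub>j\<^sub>i = -k\<close>, \<open>u\<^sub>i\<^sub>j : u\<^sub>j\<^sub>i = -e : d\<close> and
  \<open>m = m\<^sub>i\<^sub>j\<close>; these are the rank 2 cases allowed by conditions (0)--(3).\<close>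
definition rank2_data :: "(nat \<times> nat \<times> nat \<times> nat \<times> nat) set" where
  "rank2_data = {(0, 0, 0, 0, 2), (1, 1, 1, 1, 3), (2, 1, 1, 1, 4), (2, 1, 2, 1, 4),
    (3, 1, 1, 1, 6), (3, 1, 3, 2, 6), (3, 1, 2, 1, 6), (3, 1, 3, 1, 6)}"

text \<open>The action of \<open>s\<^sub>i\<close>, \<open>s\<^sub>j\<close> on \<open>a1 = \<alpha>\<^sub>i\<close>, \<open>a2 = \<alpha>\<^sub>j\<close>, \<open>p = f\<^sub>i f\<^sub>j\<close>, where \<open>u\<^sub>i\<^sub>j = -e v\<close> and
  \<open>u\<^sub>j\<^sub>i = d v\<close>: on these elements both act linearly.\<close>
locale rank2_reflections =
  fixes s t :: "'a::field \<Rightarrow> 'a" and v a1 a2 p :: 'a and n k e d m :: nat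
  assumes s_hom: "is_ring_hom s" and t_hom: "is_ring_hom t"
    and data: "(n, k, e, d, m) \<in> rank2_data"
    and s_v: "s v = v" and t_v: "t v = v"
    and s_a1: "s a1 = - a1" and s_a2: "s a2 = a2 + of_nat n * a1"
    and s_p: "s p = p - of_nat e * v * a1"
    and t_a2: "t a2 = - a2" and t_a1: "t a1 = a1 + of_nat k * a2"
    and t_p: "t p = p + of_nat d * v * a2"
begin

lemmas action = ring_hom_field_simps[OF s_hom] ring_hom_field_simps[OF t_hom]
  s_v t_v s_a1 s_a2 s_p t_a1 t_a2 t_p

lemma funpow_fixes_linear:
  "((s \<circ> t) ^^ m) a1 = a1 \<and> ((s \<circ> t) ^^ m) a2 = a2 \<and> ((s \<circ> t) ^^ m) p = p"
  using data unfolding rank2_data_def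
  by (elim insertE emptyE) (simp_all add: action numeral_eq_Suc algebra_simps)

lemma orbit_products_eq:
  "(\<Prod>j<m. ((s \<circ> t) ^^ j) (s p)) = (\<Prod>j<m. ((s \<circ> t) ^^ j) ((s \<circ> t) p))"
  using data unfolding rank2_data_def
  by (elim insertE emptyE) (simp_all add: action numeral_eq_Suc, (erule thin_rl, algebra)+)

lemma funpow_fixes_twisted:
  assumes x_s: "s x = x" and x_t: "t x * p = x * t p" and p: "p \<noteq> 0"
  shows "((s \<circ> t) ^^ m) x = x"
proof -
  let ?\<sigma> = "s \<circ> t"
  have \<sigma>: "is_ring_hom ?\<sigma>"
    by (rule ring_hom_comp[OF s_hom t_hom])
  have "?\<sigma> x * s p = x * ?\<sigma> p"
    using arg_cong[OF x_t, of s] by (simp add: ring_hom_mult[OF s_hom] x_s)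
  then have "(?\<sigma> ^^ m) x * (\<Prod>j<m. (?\<sigma> ^^ j) (s p)) = x * (\<Prod>j<m. (?\<sigma> ^^ j) (?\<sigma> p))"
    by (rule ring_hom_funpow_cocycle[OF \<sigma>])
  moreover have "(\<Prod>j<m. (?\<sigma> ^^ j) (s p)) \<noteq> 0"
    using ring_hom_nonzero[OF ring_hom_funpow[OF \<sigma>]] ring_hom_nonzero[OF s_hom] p by simp
  ultimately show ?thesis
    using orbit_products_eq by simp
qed

end

section \<open>The Coxeter relations\<close>

context
  fixes A :: "('i::linorder) \<Rightarrow> 'i \<Rightarrow> int" and U :: "'i \<Rightarrow> 'i \<Rightarrow> complex"
    and s :: "'i \<Rightarrow> 'i ratfun \<Rightarrow> 'i ratfun"
  assumes family: "is_s_family A U s" and Aii: "\<And>i. A i i = 2" and Uii: "\<And>i. U i i = 0"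
begin

lemma s_family_C_alg_hom: "C_alg_hom (s i)"
  using family by (simp add: is_s_family_def)

lemma s_family_ring_hom: "is_ring_hom (s i)"
  by (rule C_alg_hom_ring_hom[OF s_family_C_alg_hom])

lemma s_family_rconst: "s i (rconst c) = rconst c"
  by (rule C_alg_hom_rconst[OF s_family_C_alg_hom])

lemma s_family_ralpha: "s i (ralpha j) = ralpha j - of_int (A i j) * ralpha i"
  using family by (simp add: is_s_family_def ring_hom_of_int[OF ring_hom_rconst])

lemma s_family_rf: "s i (rf j) = rf j + ralpha i / rf i * rconst (U i j)"
  using family by (simp add: is_s_family_def)

lemma s_family_rf_self: "s i (rf i) = rf i"
  by (simp add: s_family_rf Uii ring_hom_0[OF ring_hom_rconst])

lemmas s_family_simps = ring_hom_field_simps[OF s_family_ring_hom] s_family_rconst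
  s_family_ralpha s_family_rf_self

lemma s_family_involution: "s i \<circ> s i = id"
proof (rule C_alg_hom_eq_id)
  show "C_alg_hom (s i \<circ> s i)"
    by (intro C_alg_hom_comp s_family_C_alg_hom)
  fix v
  show "(s i \<circ> s i) (rvar v) = rvar v"
  proof (cases v)
    case (Pair is_f j)
    then show ?thesis
      using Aii rvar_nonzero[of "(True, i)"]
      by (cases is_f) (simp_all add: s_family_simps s_family_rf field_simps)
  qed
qed

lemma rank2_inverse_det:
  assumes "A i j * A j i \<noteq> 4"
  obtains c where "\<And>i. s i c = c" and "c * (4 - of_int (A i j) * of_int (A j i)) = 1"
proof
  define dt where "dt = 4 - A i j * A j i"
  have "dt \<noteq> 0"
    using assms by (simp add: dt_def)
  then have "(of_int dt :: complex) \<noteq> 0"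
    by simp
  then have "rconst (1 / of_int dt) * rconst (of_int dt) = (1 :: 'i ratfun)"
    by (simp add: ring_hom_1[OF ring_hom_rconst] flip: ring_hom_mult[OF ring_hom_rconst])
  then show "rconst (1 / of_int dt) * (4 - of_int (A i j) * of_int (A j i)) = (1 :: 'i ratfun)"
    unfolding ring_hom_of_int[OF ring_hom_rconst] by (simp add: dt_def)
qed (rule s_family_rconst)

text \<open>Once \<open>(s\<^sub>i s\<^sub>j)\<^sup>m\<close> fixes the generators indexed by \<open>i\<close> and \<open>j\<close>, it fixes every
  \<open>\<alpha>\<^sub>k\<close> and \<open>f\<^sub>k\<close>: correcting them by combinations of those generators yields elements fixed by
  both \<open>s\<^sub>i\<close> and \<open>s\<^sub>j\<close>. Solving for the coefficients needs \<open>4 - a\<^sub>i\<^sub>j a\<^sub>j\<^sub>i \<noteq> 0\<close>, or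
  \<open>u\<^sub>i\<^sub>j u\<^sub>j\<^sub>i \<noteq> 0\<close> for \<open>f\<^sub>k\<close>.\<close>
lemma rank2_fixes_ralpha:
  fixes i j :: 'i and m :: nat and W :: "'i ratfun \<Rightarrow> 'i ratfun"
  defines "W \<equiv> (s i \<circ> s j) ^^ m"
  assumes det: "A i j * A j i \<noteq> 4"
    and W_i: "W (ralpha i) = ralpha i" and W_j: "W (ralpha j) = ralpha j"
  shows "W (ralpha k) = ralpha k"
proof -
  have W: "is_ring_hom W"
    unfolding W_def by (intro ring_hom_funpow ring_hom_comp s_family_ring_hom)
  obtain c where c: "\<And>i. s i c = c" and c_det: "c * (4 - of_int (A i j) * of_int (A j i)) = 1"
    using rank2_inverse_det[OF det] by blast
  have W_c: "W c = c"
    unfolding W_def by (rule funpow_comp_fixed) (simp_all add: c)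
  define la where "la = c * of_int (- 2 * A i k + A i j * A j k)"
  define mu where "mu = c * of_int (- 2 * A j k + A j i * A i k)"
  define g where "g = ralpha k + la * ralpha i + mu * ralpha j"
  have "s i g - g = - (of_int (A i k) + 2 * la + of_int (A i j) * mu) * ralpha i"
    by (simp add: g_def la_def mu_def s_family_simps c Aii algebra_simps)
  moreover have "of_int (A i k) + 2 * la + of_int (A i j) * mu = 0"
    unfolding la_def mu_def using c_det by simp algebra
  ultimately have g_i: "s i g = g"
    by simp
  have "s j g - g = - (of_int (A j k) + of_int (A j i) * la + 2 * mu) * ralpha j"
    by (simp add: g_def la_def mu_def s_family_simps c Aii algebra_simps)
  moreover have "of_int (A j k) + of_int (A j i) * la + 2 * mu = 0"
    unfolding la_def mu_def using c_det by simp algebra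
  ultimately have g_j: "s j g = g"
    by simp
  have "W g = g"
    unfolding W_def using g_i g_j by (rule funpow_comp_fixed)
  moreover have "ralpha k = g - la * ralpha i - mu * ralpha j"
    by (simp add: g_def)
  ultimately show ?thesis
    by (simp add: ring_hom_field_simps[OF W] W_i W_j W_c la_def mu_def)
qed

lemma rank2_fixes_rf_nondegenerate:
  fixes i j :: 'i and m :: nat and W :: "'i ratfun \<Rightarrow> 'i ratfun"
  defines "W \<equiv> (s i \<circ> s j) ^^ m"
  assumes U_ij: "U i j \<noteq> 0" and U_ji: "U j i \<noteq> 0"
    and W_i: "W (rf i) = rf i" and W_j: "W (rf j) = rf j"
  shows "W (rf k) = rf k"
proof -
  have W: "is_ring_hom W"
    unfolding W_def by (intro ring_hom_funpow ring_hom_comp s_family_ring_hom)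
  have W_const: "W (rconst c) = rconst c" for c
    unfolding W_def by (rule funpow_comp_fixed) (simp_all add: s_family_rconst)
  define c1 where "c1 = U i k / U i j"
  define c2 where "c2 = U j k / U j i"
  define g where "g = rf k - rconst c1 * rf j - rconst c2 * rf i"
  have "s i g - g = ralpha i / rf i * rconst (U i k - c1 * U i j)"
    by (simp add: g_def s_family_simps s_family_rf Uii ring_hom_field_simps[OF ring_hom_rconst]
        algebra_simps)
  then have g_i: "s i g = g"
    using U_ij by (simp add: c1_def ring_hom_0[OF ring_hom_rconst])
  have "s j g - g = ralpha j / rf j * rconst (U j k - c2 * U j i)"
    by (simp add: g_def s_family_simps s_family_rf Uii ring_hom_field_simps[OF ring_hom_rconst]
        algebra_simps)
  then have g_j: "s j g = g"
    using U_ji by (simp add: c2_def ring_hom_0[OF ring_hom_rconst])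
  have "W g = g"
    unfolding W_def using g_i g_j by (rule funpow_comp_fixed)
  moreover have "rf k = g + rconst c1 * rf j + rconst c2 * rf i"
    by (simp add: g_def)
  ultimately show ?thesis
    by (simp add: ring_hom_field_simps[OF W] W_i W_j W_const)
qed

lemma rank2_fixes_rf_degenerate:
  fixes i j :: 'i and m :: nat and W :: "'i ratfun \<Rightarrow> 'i ratfun"
  defines "W \<equiv> (s i \<circ> s j) ^^ m"
  assumes det: "A i j * A j i \<noteq> 4" and U_ij: "U i j = 0" and U_ji: "U j i = 0"
    and W_ai: "W (ralpha i) = ralpha i" and W_aj: "W (ralpha j) = ralpha j"
    and W_i: "W (rf i) = rf i" and W_j: "W (rf j) = rf j"
  shows "W (rf k) = rf k"
proof -
  have W: "is_ring_hom W"
    unfolding W_def by (intro ring_hom_funpow ring_hom_comp s_family_ring_hom)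
  obtain c where c: "\<And>i. s i c = c" and c_det: "c * (4 - of_int (A i j) * of_int (A j i)) = 1"
    using rank2_inverse_det[OF det] by blast
  have W_c: "W c = c"
    unfolding W_def by (rule funpow_comp_fixed) (simp_all add: c)
  have fixed: "s i (rf i) = rf i" "s j (rf j) = rf j" "s i (rf j) = rf j" "s j (rf i) = rf i"
    using U_ij U_ji by (simp_all add: s_family_rf_self s_family_rf ring_hom_0[OF ring_hom_rconst])
  define X where "X = rconst (U i k) / rf i"
  define Y where "Y = rconst (U j k) / rf j"
  have XY: "s i X = X" "s j X = X" "s i Y = Y" "s j Y = Y" "W X = X" "W Y = Y"
    unfolding X_def Y_def
    by (simp_all add: s_family_simps ring_hom_field_simps[OF W] fixed W_i W_j
        W_def funpow_comp_fixed s_family_rconst)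
  have s_k: "s i (rf k) = rf k + X * ralpha i" "s j (rf k) = rf k + Y * ralpha j"
    by (simp_all add: s_family_rf X_def Y_def)
  define la where "la = c * (2 * X - of_int (A i j) * Y)"
  define mu where "mu = c * (2 * Y - of_int (A j i) * X)"
  define g where "g = rf k + la * ralpha i + mu * ralpha j"
  have "s i g - g = (X - 2 * la - of_int (A i j) * mu) * ralpha i"
    by (simp add: g_def la_def mu_def s_family_simps s_k XY c Aii
        algebra_simps)
  moreover have "X - 2 * la - of_int (A i j) * mu = 0"
    unfolding la_def mu_def using c_det by algebra
  ultimately have g_i: "s i g = g"
    by simp
  have "s j g - g = (Y - of_int (A j i) * la - 2 * mu) * ralpha j"
    by (simp add: g_def la_def mu_def s_family_simps s_k XY c Aii
        algebra_simps)
  moreover have "Y - of_int (A j i) * la - 2 * mu = 0"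
    unfolding la_def mu_def using c_det by algebra
  ultimately have g_j: "s j g = g"
    by simp
  have "W g = g"
    unfolding W_def using g_i g_j by (rule funpow_comp_fixed)
  moreover have "rf k = g - la * ralpha i - mu * ralpha j"
    by (simp add: g_def)
  ultimately show ?thesis
    by (simp add: ring_hom_field_simps[OF W] W_ai W_aj la_def mu_def XY W_c)
qed

lemma rank2_relation:
  assumes data: "(n, k, e, d, m) \<in> rank2_data"
    and A_ij: "A i j = - of_nat n" and A_ji: "A j i = - of_nat k"
    and U_ji: "U j i = of_nat d * v" and U_ij: "U i j = - (of_nat e * v)"
  shows "(s i \<circ> s j) ^^ m = id"
proof -
  have nonzero: "rf i \<noteq> 0" "rf j \<noteq> 0"
    by (simp_all add: rvar_nonzero)
  note rconst_simps = ring_hom_mult[OF ring_hom_rconst] ring_hom_uminus[OF ring_hom_rconst]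
    ring_hom_of_nat[OF ring_hom_rconst]
  interpret rank2_reflections "s i" "s j" "rconst v" "ralpha i" "ralpha j" "rf i * rf j" n k e d m
    using data nonzero by unfold_locales
      (simp_all add: s_family_ring_hom s_family_simps s_family_rf Aii Uii A_ij A_ji U_ij U_ji
        rconst_simps field_simps)
  have "s j (rf i) * rf j = rf i * rf j + of_nat d * rconst v * ralpha j"
    using nonzero by (simp add: s_family_rf U_ji rconst_simps field_simps)
  then have "s j (rf i) * (rf i * rf j) = rf i * s j (rf i * rf j)"
    by (simp only: t_p flip: mult.assoc) (simp add: ac_simps)
  then have W_i: "((s i \<circ> s j) ^^ m) (rf i) = rf i"
    using nonzero by (intro funpow_fixes_twisted) (simp_all add: s_family_rf_self)
  have W_j: "((s i \<circ> s j) ^^ m) (rf j) = rf j"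
    using funpow_fixes_linear W_i nonzero
    ring_hom_mult[OF ring_hom_funpow[OF ring_hom_comp[OF s_hom t_hom]], of m "rf i" "rf j"]
    by simp
  have det: "A i j * A j i \<noteq> 4" and U_zero_iff: "U i j = 0 \<longleftrightarrow> U j i = 0"
    using data by (auto simp: rank2_data_def A_ij A_ji U_ij U_ji)
  have W_ralpha: "((s i \<circ> s j) ^^ m) (ralpha l) = ralpha l" for l
    using funpow_fixes_linear by (auto intro: rank2_fixes_ralpha[OF det])
  have W_rf: "((s i \<circ> s j) ^^ m) (rf l) = rf l" for l
  proof (cases "U i j = 0")
    case True
    then show ?thesis
      using U_zero_iff W_ralpha W_i W_j by (auto intro: rank2_fixes_rf_degenerate[OF det])
  next
    case False
    then show ?thesis
      using U_zero_iff W_i W_j by (auto intro: rank2_fixes_rf_nondegenerate)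
  qed
  show ?thesis
  proof (rule C_alg_hom_eq_id)
    show "C_alg_hom ((s i \<circ> s j) ^^ m)"
      by (intro C_alg_hom_funpow C_alg_hom_comp s_family_C_alg_hom)
    show "((s i \<circ> s j) ^^ m) (rvar x) = rvar x" for x
      using W_ralpha W_rf by (cases x) (metis (full_types))
  qed
qed

end

definition admissible :: "('i \<Rightarrow> 'i \<Rightarrow> int) \<Rightarrow> ('i \<Rightarrow> 'i \<Rightarrow> complex) \<Rightarrow> bool" where
  "admissible A U \<longleftrightarrow>
    (\<forall>i j. i = j \<or> A i j = 0 \<longrightarrow> U i j = 0) \<and>
    (\<forall>i j. (A i j, A j i) = (-1, -1) \<longrightarrow> U i j = - U j i) \<and>
    (\<forall>i j. (A i j, A j i) = (-2, -1) \<longrightarrow> U i j = - U j i \<or> U i j = - 2 * U j i) \<and>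
    (\<forall>i j. (A i j, A j i) = (-3, -1) \<longrightarrow>
      U i j = - U j i \<or> U i j = - (3/2) * U j i \<or> U i j = - 2 * U j i \<or> U i j = - 3 * U j i)"

abbreviation finite_rank2_types :: "(int \<times> int) set" where
  "finite_rank2_types \<equiv> {(0, 0), (-1, -1), (-2, -1), (-3, -1)}"

lemma cox_m_sym: "cox_m A i j = cox_m A j i"
  by (simp add: cox_m_def mult.commute)

lemma gcm_finite_rank2_cases:
  assumes A: "gcm A" and ij: "i \<noteq> j" and m: "cox_m A i j = Some m"
  shows "(A i j, A j i) \<in> finite_rank2_types \<or> (A j i, A i j) \<in> finite_rank2_types"
proof -
  have a: "A i j \<le> 0" and b: "A j i \<le> 0" and zero_iff: "A i j = 0 \<longleftrightarrow> A j i = 0"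
    using A ij by (auto simp: gcm_def)
  have prod: "A i j * A j i \<in> {0, 1, 2, 3}"
    using m by (auto simp: cox_m_def Let_def split: if_splits)
  show ?thesis
  proof (cases "A i j = 0")
    case False
    then have "A i j \<le> -1" "A j i \<le> -1"
      using a b zero_iff by auto
    moreover have "- A i j * 1 \<le> - A i j * - A j i" "- A j i * 1 \<le> - A j i * - A i j"
      using calculation by (intro mult_left_mono; simp)+
    ultimately have "- A i j \<le> 3" "- A j i \<le> 3"
      using prod by (auto simp: mult.commute)
    with \<open>A i j \<le> -1\<close> \<open>A j i \<le> -1\<close> have "A i j \<in> {-1, -2, -3}" "A j i \<in> {-1, -2, -3}"
      by auto
    then show ?thesis
      using prod by (elim insertE emptyE) simp_all
  qed (use zero_iff in simp)
qed

lemma admissible_rank2_data: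
  assumes U: "admissible A U" and ij: "(A i j, A j i) \<in> finite_rank2_types"
    and m: "cox_m A i j = Some m"
  shows "\<exists>n k e d v. (n, k, e, d, m) \<in> rank2_data \<and> A i j = - of_nat n \<and> A j i = - of_nat k
    \<and> U j i = of_nat d * v \<and> U i j = - (of_nat e * v)"
proof -
  let ?P = "\<lambda>n k e d v. (n, k, e, d, m) \<in> rank2_data \<and> A i j = - of_nat n \<and> A j i = - of_nat k
    \<and> U j i = of_nat d * v \<and> U i j = - (of_nat e * v)"
  have U0: "A i j = 0 \<Longrightarrow> U i j = 0" "A j i = 0 \<Longrightarrow> U j i = 0"
    and U1: "(A i j, A j i) = (-1, -1) \<Longrightarrow> U i j = - U j i"
    and U2: "(A i j, A j i) = (-2, -1) \<Longrightarrow> U i j = - U j i \<or> U i j = - 2 * U j i"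
    and U3: "(A i j, A j i) = (-3, -1) \<Longrightarrow>
      U i j = - U j i \<or> U i j = - (3/2) * U j i \<or> U i j = - 2 * U j i \<or> U i j = - 3 * U j i"
    using U unfolding admissible_def by blast+
  from ij consider "A i j = 0" "A j i = 0" | "A i j = -1" "A j i = -1" | "A i j = -2" "A j i = -1"
    | "A i j = -3" "A j i = -1"
    by auto
  then show ?thesis
  proof cases
    case 1
    then have "?P 0 0 0 0 0"
      using U0 m by (simp add: cox_m_def rank2_data_def)
    then show ?thesis by blast
  next
    case 2
    then have "?P 1 1 1 1 (U j i)"
      using U1 m by (simp add: cox_m_def rank2_data_def)
    then show ?thesis by blast
  next
    case 3
    then have "?P 2 1 1 1 (U j i) \<or> ?P 2 1 2 1 (U j i)"
      using U2 m by (auto simp: cox_m_def rank2_data_def)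
    then show ?thesis by blast
  next
    case 4
    then have "?P 3 1 1 1 (U j i) \<or> ?P 3 1 3 2 (U j i / 2)
        \<or> ?P 3 1 2 1 (U j i) \<or> ?P 3 1 3 1 (U j i)"
      using U3 m by (auto simp: cox_m_def rank2_data_def)
    then show ?thesis by blast
  qed
qed

lemma coxeter_relation:
  assumes family: "is_s_family A U s" and A: "gcm A" and U: "admissible A U"
    and ij: "i \<noteq> j" and m: "cox_m A i j = Some m"
  shows "(s i \<circ> s j) ^^ m = id"
proof -
  have Aii: "\<And>i. A i i = 2"
    using A by (simp add: gcm_def)
  have Uii: "\<And>i. U i i = 0"
    using U unfolding admissible_def by blast
  have oriented: "(s i \<circ> s j) ^^ m = id"
    if "(A i j, A j i) \<in> finite_rank2_types" "cox_m A i j = Some m" for i j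
    using admissible_rank2_data[OF U that] by (metis rank2_relation[OF family Aii Uii])
  from gcm_finite_rank2_cases[OF A ij m] show ?thesis
  proof
    assume "(A j i, A i j) \<in> finite_rank2_types"
    then have "(s j \<circ> s i) ^^ m = id"
      using oriented m by (simp add: cox_m_sym)
    then show ?thesis
      by (rule involutions_funpow_comp_swap[OF s_family_involution s_family_involution,
            OF family Aii Uii family Aii Uii])
  qed (use oriented m in blast)
qed

theorem theorem1:
  fixes A :: "'i::{finite,linorder} \<Rightarrow> 'i \<Rightarrow> int" and U :: "'i \<Rightarrow> 'i \<Rightarrow> complex"
  assumes "gcm A"
    and "\<And>i j. i = j \<or> A i j = 0 \<Longrightarrow> U i j = 0"
    and "\<And>i j. (A i j, A j i) = (-1, -1) \<Longrightarrow> U i j = - U j i"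
    and "\<And>i j. (A i j, A j i) = (-2, -1) \<Longrightarrow> U i j = - U j i \<or> U i j = - 2 * U j i"
    and "\<And>i j. (A i j, A j i) = (-3, -1) \<Longrightarrow>
           U i j = - U j i \<or> U i j = - (3/2) * U j i \<or> U i j = - 2 * U j i \<or> U i j = - 3 * U j i"
  shows "(\<exists>s. is_s_family A U s)
    \<and> (\<forall>s. is_s_family A U s \<longrightarrow>
          (\<forall>i. s i \<circ> s i = id) \<and>
          (\<forall>i j m. i \<noteq> j \<longrightarrow> cox_m A i j = Some m \<longrightarrow> (s i \<circ> s j) ^^ m = id))"
proof -
  have U: "admissible A U"
    using assms(2-5) unfolding admissible_def by blast
  have Aii: "\<And>i. A i i = 2" and Uii: "\<And>i. U i i = 0"
    using assms(1,2) by (simp_all add: gcm_def)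
  show ?thesis
  proof (intro conjI allI impI)
    show "\<exists>s. is_s_family A U s"
      using is_s_family_s_field[of A U] Aii Uii by blast
  next
    fix s i j m
    assume family: "is_s_family A U s"
    show "s i \<circ> s i = id"
      by (rule s_family_involution[OF family Aii Uii])
    show "i \<noteq> j \<Longrightarrow> cox_m A i j = Some m \<Longrightarrow> (s i \<circ> s j) ^^ m = id"
      by (rule coxeter_relation[OF family assms(1) U])
  qed
qed

end
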